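(* Let $L:\mathbb{R}^d\to\mathbb{R}^{\mathcal{Y}}_+$ be a polyhedral loss, $\ell:\mathcal{R}\to\mathbb{R}^{\mathcal{Y}}_+$ a discrete loss, and $\psi:\mathbb{R}^d\to\mathcal{R}$ a link. Then $(L,\psi)$ is calibrated with respect to $\ell$ if and only if there exists $\epsilon>0$ such that $\psi$ is $\epsilon$-separated with respect to $\mathrm{prop}[L]$ and $\mathrm{prop}[\ell]$.
   Context: $\mathcal{Y}$ is a finite label set, $\Delta_{\mathcal{Y}}$ the probability simplex on $\mathcal{Y}$, $\mathbb{R}^{\mathcal{Y}}_+$ the nonnegative orthant. A loss $L:\mathcal{R}\to\mathbb{R}^{\mathcal{Y}}_+$ has expected loss $\langle p,L(r)\rangle$; it is discrete if $\mathcal{R}$ is finite; $L:\mathbb{R}^d\to\mathbb{R}^{\mathcal{Y}}_+$ is polyhedral if each coordinate is a pointwise maximum of finitely many affine functions of $u$. For a loss whose expected loss attains its infimum for every $p$, $\mathrm{prop}[L](p)=\arg\min_r\langle p,L(r)\rangle$ (polyhedral and discrete losses have this property). $(L,\psi)$ is calibrated with respect to $\ell$ if for all $p\in\Delta_{\mathcal{Y}}$, $\inf_{u:\psi(u)\notin\mathrm{prop}[\ell](p)}\langle p,L(u)\rangle>\inf_{u\in\mathbb{R}^d}\langle p,L(u)\rangle$ (infimum over the empty set is $+\infty$). For properties $\Gamma:\Delta_{\mathcal{Y}}\rightrightarrows\mathbb{R}^d$, $\gamma:\Delta_{\mathcal{Y}}\rightrightarrows\mathcal{R}$, a link $\psi$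 is $\epsilon$-separated with respect to $\Gamma$ and $\gamma$ if for all $u\in\mathbb{R}^d$ and $p\in\Delta_{\mathcal{Y}}$ with $\psi(u)\notin\gamma(p)$ we have $d_\infty(u,\Gamma(p))\ge\epsilon$, where $d_\infty(u,A)=\inf_{a\in A}\|u-a\|_\infty$. *)

theory Defs
  imports "HOL-Analysis.Analysis"
begin

definition prob_simplex :: "('y::finite \<Rightarrow> real) set" where
  "prob_simplex = {p. (\<forall>y. 0 \<le> p y) \<and> (\<Sum>y\<in>UNIV. p y) = 1}"

definition exp_loss :: "('r \<Rightarrow> 'y::finite \<Rightarrow> real) \<Rightarrow> ('y \<Rightarrow> real) \<Rightarrow> 'r \<Rightarrow> real" where
  "exp_loss L p r = (\<Sum>y\<in>UNIV. p y * L r y)"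

definition prop_loss :: "('r \<Rightarrow> 'y::finite \<Rightarrow> real) \<Rightarrow> ('y \<Rightarrow> real) \<Rightarrow> 'r set" where
  "prop_loss L p = {r. \<forall>r'. exp_loss L p r \<le> exp_loss L p r'}"

definition nonneg_loss :: "('r \<Rightarrow> 'y \<Rightarrow> real) \<Rightarrow> bool" where
  "nonneg_loss L \<longleftrightarrow> (\<forall>r y. 0 \<le> L r y)"

definition polyhedral_loss :: "(real^'d \<Rightarrow> 'y \<Rightarrow> real) \<Rightarrow> bool" where
  "polyhedral_loss L \<longleftrightarrow> nonneg_loss L \<and>
     (\<forall>y. \<exists>A :: ((real^'d) \<times> real) set. finite A \<and> A \<noteq> {} \<and>
          (\<forall>u. L u y = Max ((\<lambda>(a,b). a \<bullet> u + b) ` A)))"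

text \<open>Discrete loss: report set is a finite type.\<close>
definition discrete_loss :: "('r::finite \<Rightarrow> 'y \<Rightarrow> real) \<Rightarrow> bool" where
  "discrete_loss l \<longleftrightarrow> nonneg_loss l"

text \<open>Calibration of (L, psi) w.r.t. l.  The infimum over the empty set is +infinity,
  so the condition is stated with extended reals.\<close>
definition calibrated ::
  "(real^'d \<Rightarrow> 'y::finite \<Rightarrow> real) \<Rightarrow> (real^'d \<Rightarrow> 'r) \<Rightarrow> ('r \<Rightarrow> 'y \<Rightarrow> real) \<Rightarrow> bool" where
  "calibrated L psi l \<longleftrightarrow>
     (\<forall>p\<in>prob_simplex.
        (INF u\<in>{u. psi u \<notin> prop_loss l p}. ereal (exp_loss L p u))
          > (INF u\<in>UNIV. ereal (exp_loss L p u)))"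

definition linf_dist :: "real^'d \<Rightarrow> real^'d \<Rightarrow> real" where
  "linf_dist u v = Max (range (\<lambda>i. \<bar>u $ i - v $ i\<bar>))"

text \<open>d_inf(u, A) = inf_{a in A} ||u - a||_inf (as an extended real, +infinity for empty A).\<close>
definition linf_set_dist :: "real^'d \<Rightarrow> (real^'d) set \<Rightarrow> ereal" where
  "linf_set_dist u A = (INF a\<in>A. ereal (linf_dist u a))"

definition eps_separated ::
  "(real^'d \<Rightarrow> 'r) \<Rightarrow> (('y \<Rightarrow> real) \<Rightarrow> (real^'d) set) \<Rightarrow> (('y::finite \<Rightarrow> real) \<Rightarrow> 'r set) \<Rightarrow> real \<Rightarrow> bool" where
  "eps_separated psi Gam gam eps \<longleftrightarrow>
     (\<forall>u. \<forall>p\<in>prob_simplex. psi u \<notin> gam p \<longrightarrow> linf_set_dist u (Gam p) \<ge> ereal eps)"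

end

theory Submission
  imports Defs
begin

text \<open>
  For fixed p the expected loss f = \<langle>p, L(\<cdot>)\<rangle> is again a maximum of finitely many
  affine functions. Such an f is Lipschitz, so a gap between the infimum of f over the reports
  linked to a wrong decision and its global minimum keeps these reports at positive distance
  from the optimal set. Conversely f attains its minimum (Farkas) and grows at least linearly
  in the distance to its set of minimizers, because the vector from a nearest minimizer lies
  in the cone spanned by the active slopes; so a positive distance forces a gap. Finally the
  optimal set of L at p is a union of classes of points at which the same affine pieces
  dominate each other, hence prop[L] takes only finitely many values and the pointwise
  separation constants have a positive minimum.
\<close>

definition max_affine :: "('a::real_inner \<times> real) set \<Rightarrow> 'a \<Rightarrow> real" where
  "max_affine H x = Max ((\<lambda>(a, b). a \<bullet> x + b) ` H)"

definition polyhedral_fun :: "('a::real_inner \<Rightarrow> real) \<Rightarrow> bool" where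
  "polyhedral_fun f \<longleftrightarrow> (\<exists>H. finite H \<and> H \<noteq> {} \<and> f = max_affine H)"

lemma max_affine_ge:
  assumes "finite H" "(a, b) \<in> H"
  shows "a \<bullet> x + b \<le> max_affine H x"
  using assms unfolding max_affine_def by (intro Max_ge) (auto intro: rev_image_eqI)

lemma max_affine_active:
  assumes "finite H" "H \<noteq> {}"
  obtains a b where "(a, b) \<in> H" "max_affine H x = a \<bullet> x + b"
proof -
  have "max_affine H x \<in> (\<lambda>(a, b). a \<bullet> x + b) ` H"
    unfolding max_affine_def using assms by (intro Max_in) auto
  then show ?thesis using that by auto
qed

lemma max_affine_eqI:
  assumes "finite H" "(a, b) \<in> H" "\<And>a' b'. (a', b') \<in> H \<Longrightarrow> a' \<bullet> x + b' \<le> a \<bullet> x + b"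
  shows "max_affine H x = a \<bullet> x + b"
  unfolding max_affine_def using assms by (intro Max_eqI) (auto intro: rev_image_eqI)

lemma max_affine_le_iff:
  assumes "finite H" "H \<noteq> {}"
  shows "max_affine H x \<le> t \<longleftrightarrow> (\<forall>(a, b)\<in>H. a \<bullet> x + b \<le> t)"
  unfolding max_affine_def using assms by auto

lemma polyhedral_fun_lipschitz:
  assumes "polyhedral_fun f"
  shows "\<exists>K. \<forall>u v. f u - f v \<le> K * norm (u - v)"
proof -
  obtain H where H: "finite H" "H \<noteq> {}" "f = max_affine H"
    using assms unfolding polyhedral_fun_def by blast
  have "f u - f v \<le> (\<Sum>h\<in>H. norm (fst h)) * norm (u - v)" for u v
  proof -
    obtain a b where ab: "(a, b) \<in> H" "f u = a \<bullet> u + b"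
      using max_affine_active[OF H(1,2)] H(3) by metis
    have "f u - f v \<le> a \<bullet> (u - v)"
      using max_affine_ge[OF H(1) ab(1), of v] ab(2) H(3) by (simp add: inner_diff_right)
    also have "\<dots> \<le> norm a * norm (u - v)"
      by (rule norm_cauchy_schwarz)
    also have "\<dots> \<le> (\<Sum>h\<in>H. norm (fst h)) * norm (u - v)"
      using member_le_sum[OF ab(1), of "\<lambda>h. norm (fst h)"] H(1) by (simp add: mult_right_mono)
    finally show ?thesis .
  qed
  then show ?thesis by blast
qed

lemma polyhedral_fun_add:
  assumes "polyhedral_fun f" "polyhedral_fun g"
  shows "polyhedral_fun (\<lambda>x. f x + g x)"
proof -
  obtain H where H: "finite H" "H \<noteq> {}" "f = max_affine H"
    using assms(1) unfolding polyhedral_fun_def by blast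
  obtain G where G: "finite G" "G \<noteq> {}" "g = max_affine G"
    using assms(2) unfolding polyhedral_fun_def by blast
  define HG where "HG = (\<lambda>((a, b), (a', b')). (a + a', b + b')) ` (H \<times> G)"
  have "f x + g x = max_affine HG x" for x
  proof -
    obtain a b where ab: "(a, b) \<in> H" "f x = a \<bullet> x + b"
      using max_affine_active[OF H(1,2)] H(3) by metis
    obtain a' b' where ab': "(a', b') \<in> G" "g x = a' \<bullet> x + b'"
      using max_affine_active[OF G(1,2)] G(3) by metis
    have "max_affine HG x = (a + a') \<bullet> x + (b + b')"
    proof (rule max_affine_eqI)
      show "finite HG" "(a + a', b + b') \<in> HG"
        unfolding HG_def using H(1) G(1) ab(1) ab'(1) by (auto intro: rev_image_eqI)
      fix c d assume "(c, d) \<in> HG"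
      then obtain c1 d1 c2 d2 where "(c1, d1) \<in> H" "(c2, d2) \<in> G" "c = c1 + c2" "d = d1 + d2"
        unfolding HG_def by auto
      then show "c \<bullet> x + d \<le> (a + a') \<bullet> x + (b + b')"
        using max_affine_ge[OF H(1), of c1 d1 x] max_affine_ge[OF G(1), of c2 d2 x]
          ab ab' H(3) G(3)
        by (simp add: inner_add_left)
    qed
    then show ?thesis using ab ab' by (simp add: inner_add_left)
  qed
  moreover have "finite HG" "HG \<noteq> {}" unfolding HG_def using H G by auto
  ultimately show ?thesis unfolding polyhedral_fun_def by blast
qed

lemma polyhedral_fun_scale:
  assumes "polyhedral_fun f" "0 \<le> c"
  shows "polyhedral_fun (\<lambda>x. c * f x)"
proof -
  obtain H where H: "finite H" "H \<noteq> {}" "f = max_affine H"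
    using assms(1) unfolding polyhedral_fun_def by blast
  define cH where "cH = (\<lambda>(a, b). (c *\<^sub>R a, c * b)) ` H"
  have "c * f x = max_affine cH x" for x
  proof -
    obtain a b where ab: "(a, b) \<in> H" "f x = a \<bullet> x + b"
      using max_affine_active[OF H(1,2)] H(3) by metis
    have "max_affine cH x = (c *\<^sub>R a) \<bullet> x + c * b"
    proof (rule max_affine_eqI)
      show "finite cH" "(c *\<^sub>R a, c * b) \<in> cH"
        unfolding cH_def using H(1) ab(1) by (auto intro: rev_image_eqI)
      fix a' b' assume "(a', b') \<in> cH"
      then obtain a1 b1 where "(a1, b1) \<in> H" "a' = c *\<^sub>R a1" "b' = c * b1"
        unfolding cH_def by auto
      then show "a' \<bullet> x + b' \<le> (c *\<^sub>R a) \<bullet> x + c * b"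
        using max_affine_ge[OF H(1), of a1 b1 x] ab H(3) assms(2)
        by (simp add: distrib_left[symmetric] mult_left_mono)
    qed
    then show ?thesis using ab by (simp add: distrib_left)
  qed
  moreover have "finite cH" "cH \<noteq> {}" unfolding cH_def using H by auto
  ultimately show ?thesis unfolding polyhedral_fun_def by blast
qed

lemma polyhedral_fun_sum:
  assumes "finite I" "\<And>i. i \<in> I \<Longrightarrow> polyhedral_fun (f i)"
  shows "polyhedral_fun (\<lambda>x. \<Sum>i\<in>I. f i x)"
  using assms
proof (induction I rule: finite_induct)
  case empty
  have "(\<lambda>x. 0) = max_affine {(0, 0)}"
    by (simp add: fun_eq_iff max_affine_def)
  then show ?case unfolding polyhedral_fun_def by auto
next
  case (insert i I)
  then show ?case by (simp add: polyhedral_fun_add)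
qed

lemma polyhedral_fun_exp_loss:
  assumes "\<And>y. polyhedral_fun (\<lambda>u. L u y)" "\<And>y. 0 \<le> p y"
  shows "polyhedral_fun (exp_loss L p)"
  unfolding exp_loss_def using assms by (intro polyhedral_fun_sum polyhedral_fun_scale) auto

lemma polyhedral_loss_pieces:
  assumes "polyhedral_loss L"
  obtains A where "\<And>y. finite (A y)" "\<And>y. A y \<noteq> {}" "\<And>u y. L u y = max_affine (A y) u"
proof -
  from assms have "\<forall>y. \<exists>A. finite A \<and> A \<noteq> {} \<and> (\<forall>u. L u y = max_affine A u)"
    unfolding polyhedral_loss_def max_affine_def by blast
  then obtain A where "\<forall>y. finite (A y) \<and> A y \<noteq> {} \<and> (\<forall>u. L u y = max_affine (A y) u)"
    by metis
  then show ?thesis using that by blast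
qed

lemma polyhedral_loss_exp_loss:
  assumes "polyhedral_loss L" "p \<in> prob_simplex"
  shows "polyhedral_fun (exp_loss L p)" "bdd_below (range (exp_loss L p))"
proof -
  obtain A where "\<And>y. finite (A y)" "\<And>y. A y \<noteq> {}" "\<And>u y. L u y = max_affine (A y) u"
    using polyhedral_loss_pieces[OF assms(1)] by blast
  then have "polyhedral_fun (\<lambda>u. L u y)" for y
    unfolding polyhedral_fun_def by (auto intro!: exI[of _ "A y"])
  moreover have "0 \<le> p y" for y using assms(2) by (simp add: prob_simplex_def)
  ultimately show "polyhedral_fun (exp_loss L p)" by (rule polyhedral_fun_exp_loss)
  have "0 \<le> exp_loss L p u" for u
    using assms unfolding polyhedral_loss_def nonneg_loss_def prob_simplex_def exp_loss_def
    by (auto intro!: sum_nonneg)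
  then show "bdd_below (range (exp_loss L p))" by (intro bdd_belowI[of _ 0]) auto
qed

lemma convex_cone_hull_finite_image:
  fixes g :: "'b \<Rightarrow> 'a::real_vector"
  assumes "finite H" "z \<in> convex_cone hull (g ` H)"
  obtains c where "\<And>h. 0 \<le> c h" "z = (\<Sum>h\<in>H. c h *\<^sub>R g h)"
proof -
  define R where "R = {z. \<exists>c. (\<forall>h. 0 \<le> c h) \<and> z = (\<Sum>h\<in>H. c h *\<^sub>R g h)}"
  have "convex_cone hull (g ` H) \<subseteq> R"
  proof (rule hull_minimal)
    show "g ` H \<subseteq> R"
    proof
      fix z assume "z \<in> g ` H"
      then obtain h where h: "h \<in> H" "z = g h" by blast
      have "(\<Sum>k\<in>H. (if k = h then 1 else 0) *\<^sub>R g k) = (\<Sum>k\<in>H. if k = h then g k else 0)"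
        by (rule sum.cong) auto
      then have "z = (\<Sum>k\<in>H. (if k = h then 1 else 0) *\<^sub>R g k)"
        using h assms(1) by simp
      then show "z \<in> R"
        unfolding R_def by (intro CollectI exI[of _ "\<lambda>k. if k = h then 1 else 0"]) auto
    qed
    show "convex_cone R" unfolding convex_cone_iff
    proof (intro conjI ballI allI impI)
      show "0 \<in> R" unfolding R_def by (intro CollectI exI[of _ "\<lambda>k. 0"]) simp
    next
      fix x y assume "x \<in> R" "y \<in> R"
      then obtain c d where "\<forall>h. 0 \<le> c h" "x = (\<Sum>h\<in>H. c h *\<^sub>R g h)"
        "\<forall>h. 0 \<le> d h" "y = (\<Sum>h\<in>H. d h *\<^sub>R g h)" unfolding R_def by blast
      then show "x + y \<in> R" unfolding R_def
        by (intro CollectI exI[of _ "\<lambda>h. c h + d h"]) (simp add: scaleR_add_left sum.distrib)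
    next
      fix x and t :: real assume "x \<in> R" "0 \<le> t"
      then obtain c where "\<forall>h. 0 \<le> c h" "x = (\<Sum>h\<in>H. c h *\<^sub>R g h)" unfolding R_def by blast
      then show "t *\<^sub>R x \<in> R" unfolding R_def using \<open>0 \<le> t\<close>
        by (intro CollectI exI[of _ "\<lambda>h. t * c h"]) (simp add: scaleR_sum_right)
    qed
  qed
  then show ?thesis using assms(2) that unfolding R_def by blast
qed

lemma farkas_convex_cone_hull:
  fixes C :: "'a::euclidean_space set"
  assumes "finite C" "z \<notin> convex_cone hull C"
  obtains w where "\<And>c. c \<in> C \<Longrightarrow> 0 \<le> w \<bullet> c" "w \<bullet> z < 0"
proof -
  let ?K = "convex_cone hull C"
  obtain w b where wb: "w \<bullet> z < b" "\<And>k. k \<in> ?K \<Longrightarrow> b < w \<bullet> k"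
    using separating_hyperplane_closed_point[OF convex_convex_cone_hull
        closed_convex_cone_hull[OF assms(1)] assms(2)]
    by blast
  have b: "b < 0" using wb(2)[OF convex_cone_hull_contains_0] by simp
  have "0 \<le> w \<bullet> c" if "c \<in> C" for c
  proof (rule ccontr)
    assume neg: "\<not> 0 \<le> w \<bullet> c"
    have "(b / (w \<bullet> c)) *\<^sub>R c \<in> ?K"
      using that b neg by (intro convex_cone_hull_mul hull_inc) (auto simp: divide_nonpos_neg)
    then have "b < w \<bullet> ((b / (w \<bullet> c)) *\<^sub>R c)" by (rule wb(2))
    then show False using neg by simp
  qed
  then show ?thesis using that wb(1) b by force
qed

lemma convex_cone_hull_inner_pos:
  assumes "z \<in> convex_cone hull C" "z \<noteq> 0"
  shows "\<exists>a\<in>C. 0 < a \<bullet> z"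
proof (rule ccontr)
  assume "\<not> (\<exists>a\<in>C. 0 < a \<bullet> z)"
  then have "C \<subseteq> {k. z \<bullet> k \<le> 0}" by (auto simp: inner_commute not_less)
  then have "convex_cone hull C \<subseteq> {k. z \<bullet> k \<le> 0}"
    by (rule hull_minimal) (rule convex_cone_halfspace_le)
  then have "z \<bullet> z \<le> 0" using assms(1) by blast
  then show False using assms(2) inner_gt_zero_iff[of z] by linarith
qed

lemma convex_cone_hull_finite_inner_bound:
  fixes C :: "'a::euclidean_space set"
  assumes "finite C"
  shows "\<exists>c>0. \<forall>z\<in>convex_cone hull C. z \<noteq> 0 \<longrightarrow> (\<exists>a\<in>C. c * norm z \<le> a \<bullet> z)"
proof -
  let ?K = "convex_cone hull C"
  define Z where "Z = ?K \<inter> sphere 0 1"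
  have normalized: "z /\<^sub>R norm z \<in> Z" if "z \<in> ?K" "z \<noteq> 0" for z
    unfolding Z_def using that by (auto intro: convex_cone_hull_mul)
  define g where "g z = (\<Sum>a\<in>C. max 0 (a \<bullet> z))" for z
  show ?thesis
  proof (cases "Z = {}")
    case True
    then show ?thesis using normalized by (intro exI[of _ 1]) auto
  next
    case False
    have "compact Z"
      unfolding Z_def using closed_convex_cone_hull[OF assms] by (simp add: closed_Int_compact)
    moreover have "continuous_on Z g" unfolding g_def by (intro continuous_intros)
    ultimately obtain z0 where z0: "z0 \<in> Z" "\<And>z. z \<in> Z \<Longrightarrow> g z0 \<le> g z"
      using continuous_attains_inf[OF _ False] by metis
    have "z0 \<in> ?K" "z0 \<noteq> 0" using z0(1) by (auto simp: Z_def)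
    then obtain a0 where a0: "a0 \<in> C" "0 < a0 \<bullet> z0" using convex_cone_hull_inner_pos by blast
    have "max 0 (a0 \<bullet> z0) \<le> g z0" unfolding g_def using a0(1) assms by (intro member_le_sum) auto
    then have g0: "0 < g z0" using a0(2) by simp
    have card: "0 < card C" using a0(1) assms card_gt_0_iff by blast
    define c where "c = g z0 / card C"
    have "\<exists>a\<in>C. c * norm z \<le> a \<bullet> z" if "z \<in> ?K" "z \<noteq> 0" for z
    proof (rule ccontr)
      assume neg: "\<not> (\<exists>a\<in>C. c * norm z \<le> a \<bullet> z)"
      have "\<forall>a\<in>C. max 0 (a \<bullet> (z /\<^sub>R norm z)) < c"
        using neg g0 card \<open>z \<noteq> 0\<close> by (auto simp: c_def field_simps not_le)
      then have "g (z /\<^sub>R norm z) < (\<Sum>a\<in>C. c)"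
        unfolding g_def using assms card by (intro sum_strict_mono) auto
      also have "\<dots> = g z0" using card by (simp add: c_def)
      finally show False using z0(2)[OF normalized[OF that]] by simp
    qed
    then show ?thesis using g0 card unfolding c_def by (intro exI[of _ "g z0 / card C"]) auto
  qed
qed

lemma eventually_at_right_0_downward_closed:
  assumes "0 < e" "P e" "\<And>e e'. P e \<Longrightarrow> 0 < e' \<Longrightarrow> e' \<le> e \<Longrightarrow> P e'"
  shows "eventually P (at_right (0::real))"
  unfolding eventually_at_right_field using assms by (intro exI[of _ e]) auto

lemma eventually_at_right_0_obtain:
  assumes "eventually P (at_right (0::real))"
  obtains t where "0 < t" "P t"
proof -
  have "\<forall>\<^sub>F t in at_right 0. 0 < t \<and> P t"
    using eventually_at_right_less assms by (rule eventually_conj)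
  from eventually_happens'[OF trivial_limit_at_right_real this] show ?thesis
    using that by blast
qed

lemma convex_cone_hull_subsets_inner_bound:
  fixes C :: "'a::euclidean_space set"
  assumes "finite C"
  obtains c where "0 < c"
    "\<And>D z. D \<subseteq> C \<Longrightarrow> z \<in> convex_cone hull D \<Longrightarrow> z \<noteq> 0 \<Longrightarrow> \<exists>a\<in>D. c * norm z \<le> a \<bullet> z"
proof -
  let ?P = "\<lambda>D c. \<forall>z\<in>convex_cone hull D. z \<noteq> 0 \<longrightarrow> (\<exists>a\<in>D. c * norm z \<le> a \<bullet> z)"
  have "eventually (?P D) (at_right 0)" if D: "D \<subseteq> C" for D
  proof -
    obtain c where "0 < c" "?P D c"
      using convex_cone_hull_finite_inner_bound[of D] finite_subset[OF D assms] by blast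
    then show ?thesis
      by (rule eventually_at_right_0_downward_closed)
        (meson mult_right_mono norm_ge_zero order_trans)
  qed
  then have "eventually (\<lambda>c. \<forall>D\<in>Pow C. ?P D c) (at_right 0)"
    using assms by (intro eventually_ball_finite) auto
  then obtain c where "0 < c" "\<forall>D\<in>Pow C. ?P D c" by (rule eventually_at_right_0_obtain)
  then show ?thesis using that by blast
qed

lemma max_affine_gap_if_in_cone:
  fixes H :: "('a::real_inner \<times> real) set"
  assumes "finite H" "(0, -1) \<in> convex_cone hull ((\<lambda>(a, b). (a, M - b)) ` H)"
  obtains \<delta> where "0 < \<delta>" "\<And>x. M + \<delta> \<le> max_affine H x"
proof -
  obtain c where c: "\<And>h. 0 \<le> c h" "(0, -1) = (\<Sum>h\<in>H. c h *\<^sub>R (case h of (a, b) \<Rightarrow> (a, M - b)))"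
    using convex_cone_hull_finite_image[OF assms] by blast
  define \<Lambda> where "\<Lambda> = (\<Sum>h\<in>H. c h)"
  have slopes: "(\<Sum>h\<in>H. c h *\<^sub>R fst h) = 0"
    using arg_cong[OF c(2), of fst] by (simp add: fst_sum case_prod_unfold)
  have "-1 = (\<Sum>h\<in>H. c h * (M - snd h))"
    using arg_cong[OF c(2), of snd] by (simp add: snd_sum case_prod_unfold)
  then have offsets: "(\<Sum>h\<in>H. c h * snd h) = \<Lambda> * M + 1"
    by (simp add: \<Lambda>_def right_diff_distrib sum_subtractf sum_distrib_right)
  \<comment> \<open>averaging the pieces with the weights c gives the constant \<Lambda> * M + 1\<close>
  have below: "\<Lambda> * M + 1 \<le> \<Lambda> * max_affine H x" for x
  proof -
    have "(\<Sum>h\<in>H. c h * (fst h \<bullet> x)) = (\<Sum>h\<in>H. c h *\<^sub>R fst h) \<bullet> x"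
      by (simp add: inner_sum_left)
    then have "\<Lambda> * M + 1 = (\<Sum>h\<in>H. c h * (fst h \<bullet> x + snd h))"
      using slopes offsets by (simp add: distrib_left sum.distrib)
    also have "\<dots> \<le> (\<Sum>h\<in>H. c h * max_affine H x)"
      using c(1) max_affine_ge[OF assms(1)] by (intro sum_mono mult_left_mono) auto
    finally show ?thesis by (simp add: \<Lambda>_def sum_distrib_right)
  qed
  have "0 \<le> \<Lambda>" unfolding \<Lambda>_def using c(1) by (simp add: sum_nonneg)
  moreover have "\<Lambda> \<noteq> 0" using below[of 0] by auto
  ultimately have "0 < \<Lambda>" by simp
  moreover have "M + 1 / \<Lambda> \<le> max_affine H x" for x
    using below[of x] \<open>0 < \<Lambda>\<close> by (simp add: field_simps)
  ultimately show ?thesis by (intro that[of "1 / \<Lambda>"]) auto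
qed

lemma max_affine_le_if_not_in_cone:
  fixes H :: "('a::euclidean_space \<times> real) set"
  assumes "finite H" "H \<noteq> {}" "(0, -1) \<notin> convex_cone hull ((\<lambda>(a, b). (a, M - b)) ` H)"
  obtains x where "max_affine H x \<le> M"
proof -
  obtain w where w: "\<And>k. k \<in> (\<lambda>(a, b). (a, M - b)) ` H \<Longrightarrow> 0 \<le> w \<bullet> k" "w \<bullet> (0, -1) < 0"
    using farkas_convex_cone_hull[OF finite_imageI[OF assms(1)] assms(3)] by blast
  obtain v \<alpha> where v\<alpha>: "w = (v, \<alpha>)" by fastforce
  have "0 < \<alpha>" using w(2) v\<alpha> by simp
  have "a \<bullet> (- (1 / \<alpha>) *\<^sub>R v) + b \<le> M" if "(a, b) \<in> H" for a b
  proof -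
    have "0 \<le> v \<bullet> a + \<alpha> * (M - b)" using w(1)[OF imageI[OF that]] v\<alpha> by simp
    moreover have "a \<bullet> (- (1 / \<alpha>) *\<^sub>R v) = - (1 / \<alpha>) * (v \<bullet> a)"
      by (simp add: inner_commute)
    ultimately show ?thesis using \<open>0 < \<alpha>\<close> by (simp add: field_simps)
  qed
  then have "max_affine H (- (1 / \<alpha>) *\<^sub>R v) \<le> M"
    by (subst max_affine_le_iff[OF assms(1,2)]) auto
  then show ?thesis by (rule that)
qed

lemma polyhedral_fun_attains_min:
  fixes f :: "'a::euclidean_space \<Rightarrow> real"
  assumes "polyhedral_fun f" "bdd_below (range f)"
  obtains x0 where "\<And>x. f x0 \<le> f x"
proof -
  obtain H where H: "finite H" "H \<noteq> {}" "f = max_affine H"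
    using assms(1) unfolding polyhedral_fun_def by blast
  define M where "M = Inf (range f)"
  have M: "M \<le> f x" for x unfolding M_def using assms(2) by (simp add: cInf_lower)
  \<comment> \<open>Farkas alternative for the vectors (a, M - b)\<close>
  consider (attained) x where "f x \<le> M" | (gap) \<delta> where "0 < \<delta>" "\<And>x. M + \<delta> \<le> f x"
    using max_affine_le_if_not_in_cone[OF H(1,2)] max_affine_gap_if_in_cone[OF H(1)] H(3) by metis
  then show ?thesis
  proof cases
    case attained
    then show ?thesis using M that order_trans by blast
  next
    case gap
    then have "M + \<delta> \<le> M" unfolding M_def by (intro cInf_greatest) auto
    then show ?thesis using gap(1) by simp
  qed
qed

lemma polyhedron_feasible_direction:
  fixes H :: "('a::real_inner \<times> real) set"
  assumes "finite H" "\<forall>(a, b)\<in>H. a \<bullet> s \<le> b" "\<And>a. (a, a \<bullet> s) \<in> H \<Longrightarrow> a \<bullet> z \<le> 0"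
  shows "\<forall>\<^sub>F t in at_right 0. \<forall>(a, b)\<in>H. a \<bullet> (s + t *\<^sub>R z) \<le> b"
proof -
  have "\<forall>\<^sub>F t in at_right 0. a \<bullet> (s + t *\<^sub>R z) \<le> b" if ab: "(a, b) \<in> H" for a b
  proof (cases "a \<bullet> s = b")
    case True
    then have "a \<bullet> z \<le> 0" using assms(3) ab by blast
    then have "a \<bullet> (s + t *\<^sub>R z) \<le> b" if "0 < t" for t
      using that True by (simp add: inner_add_right mult_nonneg_nonpos)
    then show ?thesis using eventually_at_right_less[of "0::real"] by (auto elim: eventually_mono)
  next
    case False
    then have "a \<bullet> s < b" using assms(2) ab by fastforce
    moreover have "((\<lambda>t. a \<bullet> (s + t *\<^sub>R z)) \<longlongrightarrow> a \<bullet> s) (at_right 0)"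
      by (auto intro!: tendsto_eq_intros)
    ultimately have "\<forall>\<^sub>F t in at_right 0. a \<bullet> (s + t *\<^sub>R z) < b"
      by (simp add: order_tendstoD(2))
    then show ?thesis by (rule eventually_mono) simp
  qed
  then have "\<forall>h\<in>H. \<forall>\<^sub>F t in at_right 0. fst h \<bullet> (s + t *\<^sub>R z) \<le> snd h" by auto
  from eventually_ball_finite[OF assms(1) this] show ?thesis
    by (rule eventually_mono) auto
qed

lemma closest_point_polyhedron:
  fixes H :: "('a::euclidean_space \<times> real) set"
  defines "P \<equiv> {x. \<forall>(a, b)\<in>H. a \<bullet> x \<le> b}"
  assumes "finite H" "P \<noteq> {}"
  shows closest_point_polyhedron_in: "closest_point P u \<in> P"
    and closest_point_polyhedron_normal_cone:
      "u - closest_point P u \<in> convex_cone hull {a. (a, a \<bullet> closest_point P u) \<in> H}"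
proof -
  define s where "s = closest_point P u"
  have P_Inter: "P = (\<Inter>h\<in>H. {x. fst h \<bullet> x \<le> snd h})"
    unfolding P_def by (auto simp: case_prod_unfold)
  have "convex P" unfolding P_Inter by (intro convex_INT ballI convex_halfspace_le)
  moreover have "closed P" unfolding P_Inter by (intro closed_INT ballI closed_halfspace_le)
  ultimately have s: "s \<in> P" "\<And>y. y \<in> P \<Longrightarrow> (u - s) \<bullet> (y - s) \<le> 0"
    unfolding s_def using closest_point_in_set closest_point_dot assms(3) by blast+
  then show "closest_point P u \<in> P" by (simp add: s_def)
  show "u - closest_point P u \<in> convex_cone hull {a. (a, a \<bullet> closest_point P u) \<in> H}"
    unfolding s_def[symmetric]
  proof (rule ccontr)
    have "finite {a. (a, a \<bullet> s) \<in> H}"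
      using finite_imageI[OF assms(2), of fst] by (rule finite_subset[rotated]) force
    moreover assume "u - s \<notin> convex_cone hull {a. (a, a \<bullet> s) \<in> H}"
    ultimately obtain w where w: "\<And>a. a \<in> {a. (a, a \<bullet> s) \<in> H} \<Longrightarrow> 0 \<le> w \<bullet> a" "w \<bullet> (u - s) < 0"
      by (rule farkas_convex_cone_hull) blast
    have "\<forall>\<^sub>F t in at_right 0. s + t *\<^sub>R (- w) \<in> P"
      using polyhedron_feasible_direction[OF assms(2), of s "- w"] s(1) w(1)
      unfolding P_def by (simp add: inner_commute)
    then obtain t where "0 < t" "s + t *\<^sub>R (- w) \<in> P" by (rule eventually_at_right_0_obtain)
    then have "- t * ((u - s) \<bullet> w) \<le> 0" using s(2)[of "s + t *\<^sub>R (- w)"] by simp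
    moreover have "(u - s) \<bullet> w < 0" using w(2) by (simp add: inner_commute)
    then have "t * ((u - s) \<bullet> w) < 0" using \<open>0 < t\<close> by (simp add: mult_pos_neg)
    ultimately show False by simp
  qed
qed

lemma closest_point_max_affine_sublevel:
  fixes H :: "('a::euclidean_space \<times> real) set" and m :: real
  defines "S \<equiv> {x. max_affine H x \<le> m}"
  assumes "finite H" "H \<noteq> {}" "S \<noteq> {}"
  shows "closest_point S u \<in> S"
    and "u - closest_point S u \<in>
      convex_cone hull {a. \<exists>b. (a, b) \<in> H \<and> a \<bullet> closest_point S u + b = m}"
proof -
  define H' where "H' = (\<lambda>(a, b). (a, m - b)) ` H"
  have S: "S = {x. \<forall>(a, b)\<in>H'. a \<bullet> x \<le> b}"
    unfolding S_def H'_def max_affine_le_iff[OF assms(2,3)] by (force simp: algebra_simps)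
  have "finite H'" using assms(2) by (simp add: H'_def)
  note closest = closest_point_polyhedron[OF this, folded S, OF assms(4)]
  show "closest_point S u \<in> S" by (rule closest(1))
  have active: "{a. (a, a \<bullet> closest_point S u) \<in> H'} =
      {a. \<exists>b. (a, b) \<in> H \<and> a \<bullet> closest_point S u + b = m}"
    unfolding H'_def by (force simp: algebra_simps)
  from closest(2)[of u] show "u - closest_point S u \<in>
      convex_cone hull {a. \<exists>b. (a, b) \<in> H \<and> a \<bullet> closest_point S u + b = m}"
    unfolding active .
qed

lemma polyhedral_fun_sharp_min:
  fixes f :: "'a::euclidean_space \<Rightarrow> real"
  assumes "polyhedral_fun f" "\<And>x. f x0 \<le> f x"
  obtains c where "0 < c" "\<And>u. \<exists>s. f s = f x0 \<and> c * norm (u - s) \<le> f u - f x0"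
proof -
  obtain H where H: "finite H" "H \<noteq> {}" "f = max_affine H"
    using assms(1) unfolding polyhedral_fun_def by blast
  define m where "m = f x0"
  define S where "S = {x. f x \<le> m}"
  have "S \<noteq> {}" by (auto simp: S_def m_def)
  note closest =
    closest_point_max_affine_sublevel[OF H(1,2), of m, folded H(3), folded S_def, OF this]
  obtain c where c: "0 < c"
    "\<And>D z. D \<subseteq> fst ` H \<Longrightarrow> z \<in> convex_cone hull D \<Longrightarrow> z \<noteq> 0 \<Longrightarrow> \<exists>a\<in>D. c * norm z \<le> a \<bullet> z"
    using convex_cone_hull_subsets_inner_bound[OF finite_imageI[OF H(1)]] by blast
  have "\<exists>s. f s = m \<and> c * norm (u - s) \<le> f u - m" for u
  proof -
    define s where "s = closest_point S u"
    define J where "J = {a. \<exists>b. (a, b) \<in> H \<and> a \<bullet> s + b = m}"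
    have "f s = m" using closest(1) assms(2) unfolding s_def S_def m_def by (simp add: antisym)
    moreover have "c * norm (u - s) \<le> f u - m"
    proof (cases "u = s")
      case True
      then show ?thesis using \<open>f s = m\<close> by simp
    next
      case False
      have "u - s \<in> convex_cone hull J" using closest(2) unfolding J_def s_def .
      moreover have "J \<subseteq> fst ` H" unfolding J_def by force
      moreover have "u - s \<noteq> 0" using False by simp
      ultimately obtain a where "a \<in> J" "c * norm (u - s) \<le> a \<bullet> (u - s)"
        using c(2) by blast
      moreover from \<open>a \<in> J\<close> obtain b where "(a, b) \<in> H" "a \<bullet> s + b = m"
        unfolding J_def by blast
      moreover have "a \<bullet> u + b \<le> f u"
        using max_affine_ge[OF H(1) \<open>(a, b) \<in> H\<close>] H(3) by simp
      ultimately show ?thesis by (simp add: inner_diff_right)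
    qed
    ultimately show ?thesis by blast
  qed
  then show ?thesis using that c(1) unfolding m_def by blast
qed

lemma max_affine_family_active:
  assumes "\<And>y. finite (A y)" "\<And>y. A y \<noteq> {}"
  obtains a b where "\<And>y. (a y, b y) \<in> A y" "\<And>y. max_affine (A y) u = a y \<bullet> u + b y"
proof -
  have "\<exists>h\<in>A y. max_affine (A y) u = fst h \<bullet> u + snd h" for y
    using max_affine_active[OF assms] by (metis fst_conv snd_conv)
  then obtain h where "\<And>y. h y \<in> A y" "\<And>y. max_affine (A y) u = fst (h y) \<bullet> u + snd (h y)"
    by metis
  then show ?thesis using that[of "\<lambda>y. fst (h y)" "\<lambda>y. snd (h y)"] by simp
qed

definition piece_order ::
    "('a::real_inner \<times> real) set \<Rightarrow> 'a \<Rightarrow> (('a \<times> real) \<times> ('a \<times> real)) set" where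
  "piece_order H x = {((a, b), (a', b')) \<in> H \<times> H. a \<bullet> x + b \<le> a' \<bullet> x + b'}"

lemma piece_order_iff:
  assumes "(a, b) \<in> H" "(a', b') \<in> H" "piece_order H u = piece_order H v"
  shows "a \<bullet> u + b \<le> a' \<bullet> u + b' \<longleftrightarrow> a \<bullet> v + b \<le> a' \<bullet> v + b'"
  using assms by (auto simp: piece_order_def set_eq_iff)

lemma max_affine_piece_order_active:
  assumes "finite H" "(a, b) \<in> H" "max_affine H u = a \<bullet> u + b"
    and "piece_order H u = piece_order H v"
  shows "max_affine H v = a \<bullet> v + b"
proof (rule max_affine_eqI[OF assms(1,2)])
  fix a' b' assume h': "(a', b') \<in> H"
  then have "a' \<bullet> u + b' \<le> a \<bullet> u + b" using max_affine_ge[OF assms(1)] assms(3) by metis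
  then show "a' \<bullet> v + b' \<le> a \<bullet> v + b" using piece_order_iff[OF h' assms(2,4)] by blast
qed

lemma max_affine_piece_order_extrapolate:
  assumes "finite H" "(a, b) \<in> H" "max_affine H u = a \<bullet> u + b"
    and "piece_order H u = piece_order H v"
  shows "\<forall>\<^sub>F e in at_right 0.
    max_affine H ((1 + e) *\<^sub>R u - e *\<^sub>R v) = a \<bullet> ((1 + e) *\<^sub>R u - e *\<^sub>R v) + b"
proof -
  define w where "w e = (1 + e) *\<^sub>R u - e *\<^sub>R v" for e :: real
  have w: "a' \<bullet> w e + b' = (1 + e) * (a' \<bullet> u + b') - e * (a' \<bullet> v + b')" for a' b' e
    by (simp add: w_def inner_diff_right algebra_simps)
  have "\<forall>\<^sub>F e in at_right 0. a' \<bullet> w e + b' \<le> a \<bullet> w e + b" if h': "(a', b') \<in> H" for a' b'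
  proof (cases "a' \<bullet> u + b' = a \<bullet> u + b")
    case True
    then have "a' \<bullet> v + b' = a \<bullet> v + b"
      using piece_order_iff[OF h' assms(2,4)] piece_order_iff[OF assms(2) h' assms(4)] by linarith
    then show ?thesis using True by (simp add: w)
  next
    case False
    then have "0 < (a \<bullet> u + b) - (a' \<bullet> u + b')"
      using max_affine_ge[OF assms(1) h', of u] assms(3) by simp
    moreover have
      "((\<lambda>e. (a \<bullet> w e + b) - (a' \<bullet> w e + b')) \<longlongrightarrow> (a \<bullet> u + b) - (a' \<bullet> u + b')) (at_right 0)"
      unfolding w by (auto intro!: tendsto_eq_intros)
    ultimately have "\<forall>\<^sub>F e in at_right 0. 0 < (a \<bullet> w e + b) - (a' \<bullet> w e + b')"
      by (rule order_tendstoD(1)[rotated])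
    then show ?thesis by (rule eventually_mono) simp
  qed
  then have "\<forall>h\<in>H. \<forall>\<^sub>F e in at_right 0. fst h \<bullet> w e + snd h \<le> a \<bullet> w e + b" by auto
  from eventually_ball_finite[OF assms(1) this] show ?thesis
    by (rule eventually_mono) (auto simp: w_def intro!: max_affine_eqI[OF assms(1,2)])
qed

lemma prop_loss_piece_order_cong:
  fixes L :: "'a::real_inner \<Rightarrow> 'y::finite \<Rightarrow> real"
  assumes A: "\<And>y. finite (A y)" "\<And>y. A y \<noteq> {}" "\<And>u y. L u y = max_affine (A y) u"
    and same: "\<And>y. piece_order (A y) u = piece_order (A y) v"
    and u: "u \<in> prop_loss L p"
  shows "v \<in> prop_loss L p"
proof -
  obtain a b where ab: "\<And>y. (a y, b y) \<in> A y" "\<And>y. max_affine (A y) u = a y \<bullet> u + b y"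
    by (rule max_affine_family_active[of A u, OF A(1,2)]) blast
  define F where "F x = (\<Sum>y\<in>UNIV. p y * (a y \<bullet> x + b y))" for x
  define w where "w e = (1 + e) *\<^sub>R u - e *\<^sub>R v" for e :: real
  have Fw: "F (w e) = (1 + e) * F u - e * F v" for e
  proof -
    have "p y * (a y \<bullet> w e + b y) =
        (1 + e) * (p y * (a y \<bullet> u + b y)) - e * (p y * (a y \<bullet> v + b y))" for y
      by (simp add: w_def inner_diff_right algebra_simps)
    then show ?thesis unfolding F_def by (simp add: sum_subtractf sum_distrib_left)
  qed
  have Eu: "exp_loss L p u = F u"
    unfolding exp_loss_def F_def A(3) ab(2) ..
  have Ev: "exp_loss L p v = F v"
    unfolding exp_loss_def F_def A(3) max_affine_piece_order_active[OF A(1) ab same] ..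
  \<comment> \<open>On the line from v through u the pieces active at u stay active slightly beyond u, where
    the expected loss is therefore affine; so minimality at u forces F v \<le> F u.\<close>
  have "\<forall>\<^sub>F e in at_right 0. \<forall>y. max_affine (A y) (w e) = a y \<bullet> w e + b y"
    unfolding w_def
    by (intro eventually_all_finite max_affine_piece_order_extrapolate[OF A(1) ab same])
  then obtain e where e: "0 < e" "\<forall>y. max_affine (A y) (w e) = a y \<bullet> w e + b y"
    by (rule eventually_at_right_0_obtain)
  have "exp_loss L p (w e) = F (w e)"
    unfolding exp_loss_def F_def A(3) e(2)[rule_format] ..
  then have "F u \<le> (1 + e) * F u - e * F v"
    using u Eu Fw unfolding prop_loss_def by (metis mem_Collect_eq)
  then have "F v \<le> F u" using e(1) by (simp add: algebra_simps)
  then show ?thesis using u Eu Ev unfolding prop_loss_def by (auto intro: order_trans)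
qed

lemma finite_range_prop_loss:
  fixes L :: "'a::real_inner \<Rightarrow> 'y::finite \<Rightarrow> real"
  assumes A: "\<And>y. finite (A y)" "\<And>y. A y \<noteq> {}" "\<And>u y. L u y = max_affine (A y) u"
  shows "finite (range (prop_loss L))"
proof -
  define pattern where "pattern x = (\<lambda>y. piece_order (A y) x)" for x
  have "pattern x \<in> PiE UNIV (\<lambda>y. Pow (A y \<times> A y))" for x
    unfolding pattern_def piece_order_def PiE_def by auto
  then have "range pattern \<subseteq> PiE UNIV (\<lambda>y. Pow (A y \<times> A y))" by blast
  moreover have "finite (PiE UNIV (\<lambda>y. Pow (A y \<times> A y)))"
    using A(1) by (simp add: finite_PiE)
  ultimately have "finite (Pow (range pattern))" by (simp add: finite_subset)
  moreover have "prop_loss L p = pattern -` (pattern ` prop_loss L p)" for p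
  proof
    show "pattern -` (pattern ` prop_loss L p) \<subseteq> prop_loss L p"
    proof
      fix x assume "x \<in> pattern -` (pattern ` prop_loss L p)"
      then obtain v where "v \<in> prop_loss L p" "pattern v = pattern x" by auto
      then show "x \<in> prop_loss L p"
        using prop_loss_piece_order_cong[of A L v x p] A by (simp add: pattern_def fun_eq_iff)
    qed
  qed auto
  then have "range (prop_loss L) \<subseteq> (\<lambda>T. pattern -` T) ` Pow (range pattern)"
    by blast
  ultimately show ?thesis by (rule finite_surj)
qed

lemma linf_dist_nonneg: "0 \<le> linf_dist u v"
  unfolding linf_dist_def by (rule order_trans[OF abs_ge_zero Max_ge]) auto

lemma linf_dist_le_norm: "linf_dist u v \<le> norm (u - v)"
proof -
  have "linf_dist u v \<in> range (\<lambda>i. \<bar>u $ i - v $ i\<bar>)"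
    unfolding linf_dist_def by (intro Max_in) auto
  then show ?thesis using component_le_norm_cart[of "u - v"] by auto
qed

lemma norm_le_card_linf_dist: "norm (u - v) \<le> CARD('d) * linf_dist u (v :: real^'d)"
proof -
  have "norm (u - v) \<le> (\<Sum>i\<in>UNIV. \<bar>(u - v) $ i\<bar>)" by (rule norm_le_l1_cart)
  also have "\<dots> \<le> (\<Sum>i\<in>(UNIV::'d set). linf_dist u v)"
    unfolding linf_dist_def by (intro sum_mono Max_ge) auto
  finally show ?thesis by simp
qed

lemma polyhedral_fun_linf_lipschitz:
  fixes f :: "real^'d \<Rightarrow> real"
  assumes "polyhedral_fun f"
  obtains K where "0 < K" "\<And>u v. f u - f v \<le> K * linf_dist u v"
proof -
  obtain K where K: "\<And>u v. f u - f v \<le> K * norm (u - v)"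
    using polyhedral_fun_lipschitz[OF assms] by blast
  have "f u - f v \<le> (\<bar>K\<bar> * CARD('d) + 1) * linf_dist u v" for u v
  proof -
    have "f u - f v \<le> \<bar>K\<bar> * norm (u - v)"
      using K[of u v] by (meson abs_ge_self mult_right_mono norm_ge_zero order_trans)
    also have "\<dots> \<le> \<bar>K\<bar> * (CARD('d) * linf_dist u v)"
      by (intro mult_left_mono norm_le_card_linf_dist) simp
    also have "\<dots> \<le> (\<bar>K\<bar> * CARD('d) + 1) * linf_dist u v"
      using linf_dist_nonneg[of u v] by (simp add: algebra_simps)
    finally show ?thesis .
  qed
  then show ?thesis using that[of "\<bar>K\<bar> * CARD('d) + 1"] by (simp add: add_nonneg_pos)
qed

lemma lipschitz_gap_imp_linf_separation:
  fixes f :: "real^'d \<Rightarrow> real"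
  assumes K: "0 < K" "\<And>u v. f u - f v \<le> K * linf_dist u v"
    and gap: "(INF u. ereal (f u)) < (INF u\<in>B. ereal (f u))"
  shows "\<exists>e>0. \<forall>u\<in>B. ereal e \<le> linf_set_dist u {x. \<forall>x'. f x \<le> f x'}"
proof (cases "\<exists>x0. \<forall>x. f x0 \<le> f x")
  case False
  then have argmin_empty: "{x. \<forall>x'. f x \<le> f x'} = {}" by auto
  show ?thesis unfolding linf_set_dist_def argmin_empty by (intro exI[of _ 1]) simp
next
  case True
  then obtain x0 where x0: "\<And>x. f x0 \<le> f x" by blast
  have "(INF u. ereal (f u)) = ereal (f x0)"
    using x0 by (intro antisym INF_lower2[of x0] INF_greatest) auto
  with gap have "ereal (f x0) < (INF u\<in>B. ereal (f u))" by simp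
  then obtain c where c: "ereal (f x0) < ereal c" "ereal c < (INF u\<in>B. ereal (f u))"
    using ereal_dense2 by blast
  define e where "e = (c - f x0) / K"
  have "ereal e \<le> linf_set_dist u {x. \<forall>x'. f x \<le> f x'}" if "u \<in> B" for u
    unfolding linf_set_dist_def
  proof (rule INF_greatest)
    fix v assume "v \<in> {x. \<forall>x'. f x \<le> f x'}"
    then have "f v = f x0" using x0 by (simp add: antisym)
    moreover have "ereal c < ereal (f u)"
      using c(2) INF_lower[OF that, of "\<lambda>u. ereal (f u)"] by (rule order.strict_trans2)
    ultimately have "c - f x0 \<le> K * linf_dist u v" using K(2)[of u v] by simp
    then show "ereal e \<le> ereal (linf_dist u v)"
      using K(1) by (simp add: e_def divide_le_eq mult.commute)
  qed
  moreover have "0 < e" using c(1) K(1) by (simp add: e_def)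
  ultimately show ?thesis by blast
qed

lemma sharp_min_linf_separation_imp_gap:
  fixes f :: "real^'d \<Rightarrow> real"
  assumes c: "0 < c" "\<And>u. \<exists>s. f s = f x0 \<and> c * norm (u - s) \<le> f u - f x0"
    and x0: "\<And>x. f x0 \<le> f x"
    and sep: "0 < e" "\<And>u. u \<in> B \<Longrightarrow> ereal e \<le> linf_set_dist u {x. \<forall>x'. f x \<le> f x'}"
  shows "(INF u. ereal (f u)) < (INF u\<in>B. ereal (f u))"
proof -
  have INF_all: "(INF u. ereal (f u)) = ereal (f x0)"
    using x0 by (intro antisym INF_lower2[of x0] INF_greatest) auto
  have "ereal (f x0 + c * e) \<le> (INF u\<in>B. ereal (f u))"
  proof (rule INF_greatest)
    fix u assume "u \<in> B"
    obtain s where s: "f s = f x0" "c * norm (u - s) \<le> f u - f x0" using c(2) by blast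
    have "linf_set_dist u {x. \<forall>x'. f x \<le> f x'} \<le> ereal (linf_dist u s)"
      unfolding linf_set_dist_def by (rule INF_lower) (simp add: s(1) x0)
    with sep(2)[OF \<open>u \<in> B\<close>] have "ereal e \<le> ereal (linf_dist u s)" by (rule order_trans)
    then have "e \<le> linf_dist u s" by simp
    then have "c * e \<le> c * norm (u - s)"
      using linf_dist_le_norm[of u s] c(1) by simp
    then show "ereal (f x0 + c * e) \<le> ereal (f u)" using s(2) by simp
  qed
  moreover have "ereal (f x0) < ereal (f x0 + c * e)" using c(1) sep(1) by simp
  ultimately show ?thesis unfolding INF_all by (rule order.strict_trans2[rotated])
qed

lemma polyhedral_fun_gap_iff_linf_separation:
  fixes f :: "real^'d \<Rightarrow> real"
  assumes "polyhedral_fun f" "bdd_below (range f)"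
  shows "(INF u. ereal (f u)) < (INF u\<in>B. ereal (f u)) \<longleftrightarrow>
    (\<exists>e>0. \<forall>u\<in>B. ereal e \<le> linf_set_dist u {x. \<forall>x'. f x \<le> f x'})"
    (is "?gap \<longleftrightarrow> (\<exists>e>0. \<forall>u\<in>B. ereal e \<le> linf_set_dist u ?argmin)")
proof
  obtain K where "0 < K" "\<And>u v. f u - f v \<le> K * linf_dist u v"
    using polyhedral_fun_linf_lipschitz[OF assms(1)] by blast
  then show "?gap \<Longrightarrow> \<exists>e>0. \<forall>u\<in>B. ereal e \<le> linf_set_dist u ?argmin"
    by (rule lipschitz_gap_imp_linf_separation)
next
  assume "\<exists>e>0. \<forall>u\<in>B. ereal e \<le> linf_set_dist u ?argmin"
  then obtain e where "0 < e" "\<And>u. u \<in> B \<Longrightarrow> ereal e \<le> linf_set_dist u ?argmin" by blast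
  moreover obtain x0 where x0: "\<And>x. f x0 \<le> f x"
    using polyhedral_fun_attains_min[OF assms] by blast
  moreover obtain c where "0 < c" "\<And>u. \<exists>s. f s = f x0 \<and> c * norm (u - s) \<le> f u - f x0"
    using polyhedral_fun_sharp_min[OF assms(1) x0] by blast
  ultimately show ?gap by (intro sharp_min_linf_separation_imp_gap)
qed

lemma eps_separated_iff_pointwise:
  fixes Gam :: "('y::finite \<Rightarrow> real) \<Rightarrow> (real^'d) set" and gam :: "('y \<Rightarrow> real) \<Rightarrow> 'r set"
  assumes "finite (Gam ` prob_simplex)" "finite (gam ` prob_simplex)"
  shows "(\<exists>eps>0. eps_separated psi Gam gam eps) \<longleftrightarrow>
    (\<forall>p\<in>prob_simplex. \<exists>e>0. \<forall>u\<in>{u. psi u \<notin> gam p}. ereal e \<le> linf_set_dist u (Gam p))"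
proof
  assume "\<forall>p\<in>prob_simplex. \<exists>e>0. \<forall>u\<in>{u. psi u \<notin> gam p}. ereal e \<le> linf_set_dist u (Gam p)"
  define sep where "sep q e \<longleftrightarrow> (\<forall>u. psi u \<notin> snd q \<longrightarrow> ereal e \<le> linf_set_dist u (fst q))" for q e
  define Q where "Q = (\<lambda>p. (Gam p, gam p)) ` prob_simplex"
  have "finite Q"
    unfolding Q_def using assms by (rule finite_subset[rotated, OF finite_cartesian_product]) auto
  moreover have "\<forall>q\<in>Q. eventually (sep q) (at_right 0)"
  proof
    fix q assume "q \<in> Q"
    then obtain e where "0 < e" "sep q e"
      using \<open>\<forall>p\<in>prob_simplex. _\<close> unfolding Q_def sep_def by auto
    then show "eventually (sep q) (at_right 0)"
      by (rule eventually_at_right_0_downward_closed) (metis sep_def ereal_less_eq(3) order_trans)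
  qed
  ultimately have "\<forall>\<^sub>F e in at_right 0. \<forall>q\<in>Q. sep q e"
    by (rule eventually_ball_finite)
  then obtain eps where "0 < eps" "\<forall>q\<in>Q. sep q eps" by (rule eventually_at_right_0_obtain)
  then show "\<exists>eps>0. eps_separated psi Gam gam eps"
    unfolding eps_separated_def Q_def sep_def by auto
qed (auto simp: eps_separated_def)

theorem theorem5:
  fixes L :: "real^'d \<Rightarrow> 'y::finite \<Rightarrow> real"
    and l :: "'r::finite \<Rightarrow> 'y \<Rightarrow> real"
    and psi :: "real^'d \<Rightarrow> 'r"
  assumes "polyhedral_loss L"
    and "discrete_loss l"
  shows "calibrated L psi l \<longleftrightarrow>
         (\<exists>eps>0. eps_separated psi (prop_loss L) (prop_loss l) eps)"
proof -
  obtain A where A: "\<And>y. finite (A y)" "\<And>y. A y \<noteq> {}" "\<And>u y. L u y = max_affine (A y) u"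
    using polyhedral_loss_pieces[OF assms(1)] by blast
  have "calibrated L psi l \<longleftrightarrow> (\<forall>p\<in>prob_simplex. \<exists>e>0.
      \<forall>u\<in>{u. psi u \<notin> prop_loss l p}. ereal e \<le> linf_set_dist u (prop_loss L p))"
    unfolding calibrated_def
    using polyhedral_fun_gap_iff_linf_separation[OF polyhedral_loss_exp_loss[OF assms(1)],
        folded prop_loss_def]
    by simp
  also have "\<dots> \<longleftrightarrow> (\<exists>eps>0. eps_separated psi (prop_loss L) (prop_loss l) eps)"
  proof (rule eps_separated_iff_pointwise[symmetric])
    show "finite (prop_loss L ` prob_simplex)"
      using finite_range_prop_loss[of A L] A by (meson finite_subset image_mono subset_UNIV)
    show "finite (prop_loss l ` prob_simplex)" by (rule finite_subset[OF subset_UNIV]) simp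
  qed
  finally show ?thesis .
qed

end
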